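(* Let $K$ and $K'$ be fields with $K'$ a subfield of $K$. If $K$ has a multiplicative basis as a $K'$-vector space, then $K'=K$.
   Context: A $K'$-linear basis $B$ of a $K'$-algebra $R$ is multiplicative if for all $b,b'\in B$ either $bb'=0$ or $bb'\in B$. *)

theory Defs
  imports Main
begin

text \<open>The ambient field K is a type of class field; the subfield K' is a subset F of it.\<close>

definition is_subfield :: "'a::field set \<Rightarrow> bool" where
  "is_subfield F \<longleftrightarrow> 0 \<in> F \<and> 1 \<in> F \<and>
     (\<forall>x\<in>F. \<forall>y\<in>F. x + y \<in> F \<and> x * y \<in> F) \<and>
     (\<forall>x\<in>F. - x \<in> F) \<and> (\<forall>x\<in>F. x \<noteq> 0 \<longrightarrow> inverse x \<in> F)"

definition lin_indep_over :: "'a::field set \<Rightarrow> 'a set \<Rightarrow> bool" where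
  "lin_indep_over F B \<longleftrightarrow>
     (\<forall>S c. finite S \<and> S \<subseteq> B \<and> (\<forall>b\<in>S. c b \<in> F) \<and> (\<Sum>b\<in>S. c b * b) = 0
        \<longrightarrow> (\<forall>b\<in>S. c b = 0))"

definition spans_over :: "'a::field set \<Rightarrow> 'a set \<Rightarrow> bool" where
  "spans_over F B \<longleftrightarrow>
     (\<forall>x. \<exists>S c. finite S \<and> S \<subseteq> B \<and> (\<forall>b\<in>S. c b \<in> F) \<and> x = (\<Sum>b\<in>S. c b * b))"

definition basis_over :: "'a::field set \<Rightarrow> 'a set \<Rightarrow> bool" where
  "basis_over F B \<longleftrightarrow> lin_indep_over F B \<and> spans_over F B"

definition multiplicative_set :: "'a::field set \<Rightarrow> bool" where
  "multiplicative_set B \<longleftrightarrow> (\<forall>b\<in>B. \<forall>b'\<in>B. b * b' = 0 \<or> b * b' \<in> B)"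

end

theory Submission
  imports Defs
begin

text \<open>
  Linear independence of B makes the augmentation \<open>\<epsilon>(\<Sum> c\<^sub>b b) = \<Sum> c\<^sub>b\<close> a well-defined
  F-linear map K \<rightarrow> F with \<open>\<epsilon> b = 1\<close> for all \<open>b \<in> B\<close>. As 0 is not a basis vector, a
  multiplicative basis is closed under products, so \<open>\<epsilon>\<close> is a ring homomorphism. For any x
  the element \<open>y = x - \<epsilon> x\<close> satisfies \<open>\<epsilon> y = 0\<close>, and a nonzero y would give
  \<open>1 = \<epsilon> (y * inverse y) = \<epsilon> y * \<epsilon> (inverse y) = 0\<close>. Hence \<open>x = \<epsilon> x \<in> F\<close>.
\<close>

lemma subfield_sum_mem:
  assumes "is_subfield F" "\<forall>i\<in>I. c i \<in> F"
  shows "(\<Sum>i\<in>I. c i) \<in> F"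
proof (cases "finite I")
  case True
  then show ?thesis
    using assms(2) by induction (use assms(1) in \<open>auto simp: is_subfield_def\<close>)
next
  case False
  then show ?thesis using assms(1) by (simp add: is_subfield_def)
qed

lemma lin_indep_over_zero_notin:
  assumes "lin_indep_over F B" "1 \<in> F"
  shows "0 \<notin> B"
proof
  assume "0 \<in> B"
  with assms have "\<forall>b\<in>{0}. (1::'a) = 0"
    unfolding lin_indep_over_def by (elim allE[where x="{0}"] allE[where x="\<lambda>_. 1"]) auto
  then show False by simp
qed

lemma lin_indep_over_coeff_sum_eq_0:
  assumes "is_subfield F" "lin_indep_over F B"
    and "finite I" "f ` I \<subseteq> B" "\<forall>i\<in>I. c i \<in> F"
    and "(\<Sum>i\<in>I. c i * f i) = 0"
  shows "sum c I = 0"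
proof -
  define d where "d t = sum c {i\<in>I. f i = t}" for t
  have fin: "finite (f ` I)" using assms(3) by simp
  have "(\<Sum>t\<in>f ` I. d t * t) = (\<Sum>t\<in>f ` I. \<Sum>i\<in>{i\<in>I. f i = t}. c i * f i)"
    unfolding d_def by (intro sum.cong refl) (auto simp: sum_distrib_right)
  also have "\<dots> = 0"
    using sum.group[OF assms(3) fin, of f "\<lambda>i. c i * f i"] assms(6) by simp
  finally have "(\<Sum>t\<in>f ` I. d t * t) = 0" .
  moreover have "\<forall>t\<in>f ` I. d t \<in> F"
    unfolding d_def using assms(1,5) by (auto intro: subfield_sum_mem)
  ultimately have "\<forall>t\<in>f ` I. d t = 0"
    using assms(2,4) fin unfolding lin_indep_over_def by blast
  then have "(\<Sum>t\<in>f ` I. d t) = 0" by (rule sum.neutral)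
  then show ?thesis
    using sum.group[OF assms(3) fin, of f c] by (simp add: d_def)
qed

locale field_basis =
  fixes F :: "'a::field set" and B :: "'a set"
  assumes subfield: "is_subfield F" and basis: "basis_over F B"
begin

lemma lin_indep: "lin_indep_over F B"
  using basis by (simp add: basis_over_def)

lemma representationE:
  obtains S c where "finite S" "S \<subseteq> B" "\<forall>b\<in>S. c b \<in> F" "x = (\<Sum>b\<in>S. c b * b)"
  using basis unfolding basis_over_def spans_over_def by blast

lemma subfield_closed:
  "0 \<in> F" "1 \<in> F" "a \<in> F \<Longrightarrow> b \<in> F \<Longrightarrow> a * b \<in> F" "a \<in> F \<Longrightarrow> - a \<in> F"
  using subfield by (auto simp: is_subfield_def)

lemma zero_notin_basis: "0 \<notin> B"
  using lin_indep subfield_closed(2) by (rule lin_indep_over_zero_notin)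

definition augmentation :: "'a \<Rightarrow> 'a" where
  "augmentation x = (SOME \<sigma>. \<exists>S c. finite S \<and> S \<subseteq> B \<and> (\<forall>b\<in>S. c b \<in> F) \<and>
     x = (\<Sum>b\<in>S. c b * b) \<and> \<sigma> = sum c S)"

lemma augmentation_eq:
  assumes "finite I" "f ` I \<subseteq> B" "\<forall>i\<in>I. c i \<in> F" "x = (\<Sum>i\<in>I. c i * f i)"
  shows "augmentation x = sum c I"
proof -
  have "\<exists>\<sigma> S c. finite S \<and> S \<subseteq> B \<and> (\<forall>b\<in>S. c b \<in> F) \<and> x = (\<Sum>b\<in>S. c b * b) \<and> \<sigma> = sum c S"
    by (rule representationE[of x]) blast
  from someI_ex[OF this] obtain S d
    where S: "finite S" "S \<subseteq> B" "\<forall>b\<in>S. d b \<in> F" "x = (\<Sum>b\<in>S. d b * b)"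
      and aug: "augmentation x = sum d S"
    unfolding augmentation_def by blast
  define c' where "c' = case_sum c (\<lambda>s. - d s)"
  define f' where "f' = case_sum f id"
  have "(\<Sum>j\<in>I <+> S. c' j * f' j) = (\<Sum>i\<in>I. c i * f i) - (\<Sum>b\<in>S. d b * b)"
    using assms(1) S(1) by (simp add: sum.Plus c'_def f'_def sum_negf)
  also have "\<dots> = 0"
    by (simp only: assms(4)[symmetric] S(4)[symmetric] diff_self)
  finally have combined_eq_0: "(\<Sum>j\<in>I <+> S. c' j * f' j) = 0" .
  have "sum c' (I <+> S) = 0"
  proof (rule lin_indep_over_coeff_sum_eq_0[OF subfield lin_indep, where f=f'])
    show "finite (I <+> S)" using assms(1) S(1) by simp
    show "f' ` (I <+> S) \<subseteq> B" using assms(2) S(2) by (auto simp: f'_def)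
    show "\<forall>j\<in>I <+> S. c' j \<in> F" using assms(3) S(3) by (auto simp: c'_def subfield_closed)
  qed (rule combined_eq_0)
  then show ?thesis
    using assms(1) S(1) aug by (simp add: sum.Plus c'_def sum_negf)
qed

lemma augmentation_mem: "augmentation x \<in> F"
proof -
  obtain S c where "finite S" "S \<subseteq> B" "\<forall>b\<in>S. c b \<in> F" "x = (\<Sum>b\<in>S. c b * b)"
    by (rule representationE)
  then have "augmentation x = sum c S"
    using augmentation_eq[of S id c x] by simp
  also have "\<dots> \<in> F"
    using subfield_sum_mem[OF subfield] \<open>\<forall>b\<in>S. c b \<in> F\<close> .
  finally show ?thesis .
qed

lemma augmentation_basis:
  assumes "b \<in> B"
  shows "augmentation b = 1"
proof -
  have "augmentation b = (\<Sum>i\<in>{b}. 1)"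
    by (rule augmentation_eq[where f=id]) (use assms subfield_closed(2) in auto)
  then show ?thesis by simp
qed

lemma augmentation_add: "augmentation (x + y) = augmentation x + augmentation y"
proof -
  obtain S c where S: "finite S" "S \<subseteq> B" "\<forall>b\<in>S. c b \<in> F" "x = (\<Sum>b\<in>S. c b * b)"
    by (rule representationE)
  obtain T d where T: "finite T" "T \<subseteq> B" "\<forall>b\<in>T. d b \<in> F" "y = (\<Sum>b\<in>T. d b * b)"
    by (rule representationE)
  have "augmentation (x + y) = sum (case_sum c d) (S <+> T)"
    by (rule augmentation_eq[where f="case_sum id id"]) (use S T in \<open>auto simp: sum.Plus\<close>)
  also have "\<dots> = augmentation x + augmentation y"
    using S T augmentation_eq[of S id c x] augmentation_eq[of T id d y] by (simp add: sum.Plus)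
  finally show ?thesis .
qed

lemma augmentation_scale:
  assumes "a \<in> F"
  shows "augmentation (a * x) = a * augmentation x"
proof -
  obtain S c where S: "finite S" "S \<subseteq> B" "\<forall>b\<in>S. c b \<in> F" "x = (\<Sum>b\<in>S. c b * b)"
    by (rule representationE)
  have "augmentation (a * x) = (\<Sum>b\<in>S. a * c b)"
    by (rule augmentation_eq[where f=id])
      (use S assms in \<open>auto simp: subfield_closed sum_distrib_left mult.assoc\<close>)
  then show ?thesis
    using S augmentation_eq[of S id c x] by (simp add: sum_distrib_left)
qed

end

locale multiplicative_field_basis = field_basis +
  assumes multiplicative: "multiplicative_set B"
begin

lemma basis_mult_mem: "b \<in> B \<Longrightarrow> b' \<in> B \<Longrightarrow> b * b' \<in> B"
  using multiplicative zero_notin_basis by (auto simp: multiplicative_set_def)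

lemma augmentation_mult: "augmentation (x * y) = augmentation x * augmentation y"
proof -
  obtain S c where S: "finite S" "S \<subseteq> B" "\<forall>b\<in>S. c b \<in> F" "x = (\<Sum>b\<in>S. c b * b)"
    by (rule representationE)
  obtain T d where T: "finite T" "T \<subseteq> B" "\<forall>b\<in>T. d b \<in> F" "y = (\<Sum>b\<in>T. d b * b)"
    by (rule representationE)
  have "x * y = (\<Sum>p\<in>S \<times> T. (c (fst p) * d (snd p)) * (fst p * snd p))"
    unfolding S(4) T(4) sum_product sum.cartesian_product
    by (intro sum.cong refl) (auto simp: algebra_simps)
  then have "augmentation (x * y) = (\<Sum>p\<in>S \<times> T. c (fst p) * d (snd p))"
    by (intro augmentation_eq) (use S T in \<open>auto simp: subfield_closed intro!: basis_mult_mem\<close>)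
  also have "\<dots> = sum c S * sum d T"
    by (simp add: sum_product sum.cartesian_product case_prod_beta)
  finally show ?thesis
    using S T augmentation_eq[of S id c x] augmentation_eq[of T id d y] by simp
qed

lemma augmentation_one: "augmentation 1 = 1"
proof -
  obtain S c where "finite S" "S \<subseteq> B" "\<forall>b\<in>S. c b \<in> F" "(1::'a) = (\<Sum>b\<in>S. c b * b)"
    by (rule representationE)
  then have "S \<noteq> {}" by auto
  with \<open>S \<subseteq> B\<close> obtain b where b: "b \<in> B" by blast
  have "augmentation b = augmentation b * augmentation 1"
    using augmentation_mult[of b 1] by simp
  then show ?thesis using augmentation_basis[OF b] by simp
qed

lemma subfield_eq_UNIV: "F = UNIV"
proof -
  have "x \<in> F" for x
  proof -
    define y where "y = x - augmentation x"
    have "augmentation x = augmentation (y + augmentation x * 1)"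
      by (simp add: y_def)
    also have "\<dots> = augmentation y + augmentation x * augmentation 1"
      by (simp only: augmentation_add augmentation_scale[OF augmentation_mem])
    finally have aug_y: "augmentation y = 0"
      by (simp add: augmentation_one)
    have "y = 0"
    proof (rule ccontr)
      assume "y \<noteq> 0"
      then have "augmentation 1 = augmentation y * augmentation (inverse y)"
        by (simp flip: augmentation_mult)
      then show False by (simp add: aug_y augmentation_one)
    qed
    then show "x \<in> F" using augmentation_mem[of x] by (simp add: y_def)
  qed
  then show ?thesis by blast
qed

end

theorem lemma5p3:
  fixes F :: "'a::field set" and B :: "'a set"
  assumes "is_subfield F"
    and "basis_over F B"
    and "multiplicative_set B"
  shows "F = UNIV"
proof -
  interpret multiplicative_field_basis F B
    using assms by unfold_locales
  show ?thesis by (rule subfield_eq_UNIV)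
qed

end
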